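(* Fix $c_1\in(c_0,1)$, $c\in(c_0,c_1)$ and $R_0\in\mathcal{R}_c$, and for $0<\delta<\delta_0$ let $R_\delta=R_0-I_\delta+S_\delta$ be the travelling wave provided by the Main Theorem (so $S_\delta\in W^{2,\infty}(\mathbb{R})$, $S_\delta(0)=0$, $\|S_\delta\|_\infty\le C\delta^2$, $\|S_\delta'\|_\infty\le C\delta$, $\|S_\delta''\|_\infty\le C$, and $S_\delta$ has harmonic tails with wave number $k_c$ at $\pm\infty$, a limit at $+\infty$). Then the configurational forces satisfy $$\Upsilon_\delta=\Upsilon_0+O(\delta^2)\qquad(\delta\to0).$$
   Context: $\Delta_1F(x)=F(x+1)-2F(x)+F(x-1)$, $a(k)=\frac{\sin(k/2)}{k/2}$, $\Psi_0'(r)=\mathrm{sgn}(r)$, $\Phi_0(r)=\frac12r^2-|r|$. Potentials: $(\Psi_\delta)_{\delta>0}$ is a family of $C^2$ functions with $\Psi_\delta(0)=0$ such that $\Psi_\delta'(r)=\mathrm{sgn}(r)$ for $r\notin(-\delta,\delta)$, and $|\Psi_\delta'|\le C_\Psi$, $|\Psi_\delta''|\le C_\Psi/\delta$ on $\mathbb{R}$ with $C_\Psi$ independent of $\delta$; $\Phi_\delta(r)=\frac12r^2-\Psi_\delta(r)$; $I_\delta:=\frac12\int_{\mathbb{R}}(\Psi_\delta'-\Psi_0')\,dr$. Travelling waves solve $c^2R''=\Delta_1(R-\Psi_\delta'(R))$. Unperturbed waves (standing hypothesis, a known result): there are constants $0<c_0<1$ and $x_0,r_0,d_0,D_0>0$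 such that for every $c\in[c_0,1)$ the equation $a(k)=c$ has exactly one positive solution $k_c$, and there is a two-parameter family $\mathcal{R}_c$ of functions $R_0\in W^{2,\infty}(\mathbb{R})$ solving $c^2R_0''=\Delta_1(R_0-\mathrm{sgn}(R_0))$ with $R_0(0)=0$, given by $R_0=\bar R_0+\alpha(\cos(k_c\cdot)-1)+\beta\sin(k_c\cdot)$, $(\alpha,\beta)$ in an open neighbourhood $U_c$ of $0\in\mathbb{R}^2$, where $\bar R_0$ is a fixed member for which $\lim_{x\to+\infty}\bar R_0(x)$ exists and $\lim_{x\to-\infty}(\bar R_0(x)-\alpha_c^-(\cos(k_cx)-1)-\beta_c^-\sin(k_cx))$ exists for some constants $\alpha_c^-,\beta_c^-$. Every $R_0\in\mathcal{R}_c$ satisfies $\|R_0\|_\infty\le D_0(1-c^2)^{-1}$, $R_0(x)>r_0$ for $x>x_0$, $R_0(x)<-r_0$ for $x<-x_0$, $R_0'(x)>d_0$ for $|x|<x_0$. Configurational force of a wave $R_\delta$ (with $R_0$ corresponding to $\delta=0$): macroscopic strains $\bar r_{\delta,\pm}=\lim_{L\to\infty}\frac1L\int_0^L R_\delta(\pm x)\,dx$; $\Upsilon_{e,\delta}=\Phi_\delta(\bar r_{\delta,+})-\Phi_\delta(\bar r_{\delta,-})$, $\Upsilon_{f,\delta}=\frac12\big(\Phi_\delta'(\bar r_{\delta,+})+\Phi_\delta'(\bar r_{\delta,-})\big)(\bar r_{\delta,+}-\bar r_{\delta,-})$, and $\Upsilon_\delta=\Upsilon_{e,\delta}-\Upsilon_{f,\delta}$.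 *)

theory Defs
  imports "HOL-Analysis.Analysis" "HOL-Library.Landau_Symbols"
begin

definition Delta1 :: "(real \<Rightarrow> real) \<Rightarrow> real \<Rightarrow> real" where
  "Delta1 F x = F (x + 1) - 2 * F x + F (x - 1)"

definition disp_a :: "real \<Rightarrow> real" where
  "disp_a k = sin (k / 2) / (k / 2)"

text \<open>W^{2,infinity}(R): R is differentiable with bounded R, bounded R' and Lipschitz R'
  (equivalently R, R', R'' essentially bounded).\<close>
definition W2inf :: "(real \<Rightarrow> real) \<Rightarrow> bool" where
  "W2inf R \<longleftrightarrow> (\<forall>x. R differentiable (at x)) \<and> bounded (range R) \<and>
     bounded (range (deriv R)) \<and> (\<exists>L. \<forall>x y. \<bar>deriv R x - deriv R y\<bar> \<le> L * \<bar>x - y\<bar>)"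

text \<open>Travelling wave equation  c^2 R'' = Delta_1 (R - F(R))  for R in W^{2,infinity},
  holding almost everywhere (F = Psi'_delta; for delta = 0, F = sgn).\<close>
definition tw_solution :: "real \<Rightarrow> (real \<Rightarrow> real) \<Rightarrow> (real \<Rightarrow> real) \<Rightarrow> bool" where
  "tw_solution c F R \<longleftrightarrow> W2inf R \<and>
     (AE x in lborel. \<exists>D. (deriv R has_real_derivative D) (at x) \<and>
                          c\<^sup>2 * D = Delta1 (\<lambda>y. R y - F (R y)) x)"

definition C2 :: "(real \<Rightarrow> real) \<Rightarrow> bool" where
  "C2 f \<longleftrightarrow> (\<exists>f' f''. (\<forall>x. (f has_real_derivative f' x) (at x)) \<and>
                     (\<forall>x. (f' has_real_derivative f'' x) (at x)) \<and> continuous_on UNIV f'')"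

definition rbar_plus :: "(real \<Rightarrow> real) \<Rightarrow> real" where
  "rbar_plus R = Lim at_top (\<lambda>L. (1 / L) * integral {0..L} R)"

definition rbar_minus :: "(real \<Rightarrow> real) \<Rightarrow> real" where
  "rbar_minus R = Lim at_top (\<lambda>L. (1 / L) * integral {0..L} (\<lambda>x. R (- x)))"

definition Upsilon :: "(real \<Rightarrow> real) \<Rightarrow> (real \<Rightarrow> real) \<Rightarrow> (real \<Rightarrow> real) \<Rightarrow> real" where
  "Upsilon Phi dPhi R =
     (Phi (rbar_plus R) - Phi (rbar_minus R))
     - (1 / 2) * (dPhi (rbar_plus R) + dPhi (rbar_minus R)) * (rbar_plus R - rbar_minus R)"

definition I_delta :: "(real \<Rightarrow> real) \<Rightarrow> real" where
  "I_delta Psi = (1 / 2) * integral UNIV (\<lambda>r. deriv Psi r - sgn r)"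

end

theory Submission
  imports Defs
begin

(*
  The configurational force only depends on the macroscopic strains, i.e. the
  mean values of the wave at +oo and -oo.  Both the unperturbed wave R0 and the
  corrector S are, at each end, a constant plus a harmonic of wave number k plus
  a vanishing error ("harmonic tail"), and the mean value of such a function is
  exactly that constant.  Hence the strains of R_delta = R0 - I_delta + S_delta
  are those of R0, shifted by -I_delta, up to errors bounded by sup|S_delta| = O(delta^2).

  For delta small these strains lie outside (-delta, delta), where Psi_delta is
  affine; evaluating Upsilon there gives  -(r+ + r-) - 2 I_delta  for the smoothed
  potential and  -(r+ + r-)  for the sharp one.  The two shifts by -I_delta cancel
  the term -2 I_delta, leaving only the O(delta^2) errors.
*)

definition harmonic_tail :: "real \<Rightarrow> (real \<Rightarrow> real) \<Rightarrow> real \<Rightarrow> bool" where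
  "harmonic_tail k f l \<longleftrightarrow>
     (\<exists>a b. ((\<lambda>x. f x - a * cos (k * x) - b * sin (k * x)) \<longlongrightarrow> l) at_top)"

text \<open>The form in which the tails of the waves are given: a harmonic normalised to
  vanish at 0 shifts the mean by its cosine coefficient.\<close>

lemma harmonic_tail_at_top:
  assumes "((\<lambda>x. f x - a * (cos (k * x) - 1) - b * sin (k * x)) \<longlongrightarrow> l) at_top"
  shows "harmonic_tail k f (l - a)"
proof -
  have "((\<lambda>x. (f x - a * (cos (k * x) - 1) - b * sin (k * x)) - a) \<longlongrightarrow> l - a) at_top"
    by (intro tendsto_intros assms)
  then show ?thesis
    unfolding harmonic_tail_def by (intro exI[of _ a] exI[of _ b]) (simp add: algebra_simps)
qed

lemma harmonic_tail_at_bot: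
  assumes "((\<lambda>x. f x - a * (cos (k * x) - 1) - b * sin (k * x)) \<longlongrightarrow> l) at_bot"
  shows "harmonic_tail k (\<lambda>x. f (- x)) (l - a)"
proof -
  have "((\<lambda>x. f (- x) - a * (cos (k * x) - 1) - (- b) * sin (k * x)) \<longlongrightarrow> l) at_top"
    using assms unfolding filterlim_at_bot_mirror by simp
  then show ?thesis by (rule harmonic_tail_at_top)
qed

lemma harmonic_tail_add:
  assumes "harmonic_tail k f l" "harmonic_tail k g m"
  shows "harmonic_tail k (\<lambda>x. f x + g x) (l + m)"
proof -
  obtain a b a' b' where
    "((\<lambda>x. f x - a * cos (k * x) - b * sin (k * x)) \<longlongrightarrow> l) at_top"
    "((\<lambda>x. g x - a' * cos (k * x) - b' * sin (k * x)) \<longlongrightarrow> m) at_top"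
    using assms unfolding harmonic_tail_def by blast
  from tendsto_add[OF this]
  show ?thesis unfolding harmonic_tail_def
    by (intro exI[of _ "a + a'"] exI[of _ "b + b'"]) (simp add: algebra_simps)
qed

lemma harmonic_tail_const: "harmonic_tail k (\<lambda>x. c) c"
  unfolding harmonic_tail_def by (intro exI[of _ 0]) simp

lemma harmonic_tail_uminus:
  assumes "harmonic_tail k f l"
  shows "harmonic_tail k (\<lambda>x. - f x) (- l)"
proof -
  obtain a b where "((\<lambda>x. f x - a * cos (k * x) - b * sin (k * x)) \<longlongrightarrow> l) at_top"
    using assms unfolding harmonic_tail_def by blast
  from tendsto_minus[OF this] show ?thesis unfolding harmonic_tail_def
    by (intro exI[of _ "- a"] exI[of _ "- b"]) (simp add: algebra_simps)
qed

text \<open>The mean is controlled by eventual bounds on the function: sampling at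
  the crests and troughs of the harmonic yields limits l + a and l - a.\<close>

lemma harmonic_tail_lower_bound:
  assumes k: "k > 0" and tail: "harmonic_tail k f l"
    and ev: "eventually (\<lambda>x. f x \<ge> r) at_top"
  shows "r \<le> l"
proof -
  obtain a b where lim: "((\<lambda>x. f x - a * cos (k * x) - b * sin (k * x)) \<longlongrightarrow> l) at_top"
    using tail unfolding harmonic_tail_def by blast
  define t where "t n = 2 * pi / k * real n" for n :: nat
  have t_top: "filterlim t at_top sequentially"
    unfolding t_def using k
    by (intro filterlim_tendsto_pos_mult_at_top[OF tendsto_const] filterlim_real_sequentially) auto
  have s_top: "filterlim (\<lambda>n. t n + pi / k) at_top sequentially"
    using filterlim_tendsto_add_at_top[OF tendsto_const t_top, of "pi / k"] by (simp add: add.commute)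
  have crest: "k * t n = 2 * real n * pi" and trough: "k * (t n + pi / k) = 2 * real n * pi + pi" for n
    using k by (auto simp: t_def field_simps)
  have "((\<lambda>n. f (t n) - a) \<longlongrightarrow> l) sequentially"
    using filterlim_compose[OF lim t_top] by (simp add: crest)
  moreover have "eventually (\<lambda>n. f (t n) - a \<ge> r - a) sequentially"
    using filterlim_iff[THEN iffD1, OF t_top, rule_format, OF ev] by (rule eventually_mono) auto
  ultimately have "r - a \<le> l" by (rule tendsto_lowerbound) simp
  moreover have "((\<lambda>n. f (t n + pi / k) + a) \<longlongrightarrow> l) sequentially"
    using filterlim_compose[OF lim s_top] by (simp add: trough cos_add sin_add)
  moreover have "eventually (\<lambda>n. f (t n + pi / k) + a \<ge> r + a) sequentially"
    using filterlim_iff[THEN iffD1, OF s_top, rule_format, OF ev] by (rule eventually_mono) auto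
  ultimately show ?thesis using tendsto_lowerbound by fastforce
qed

lemma harmonic_tail_upper_bound:
  assumes "k > 0" "harmonic_tail k f l" "eventually (\<lambda>x. f x \<le> r) at_top"
  shows "l \<le> r"
  using harmonic_tail_lower_bound[OF assms(1) harmonic_tail_uminus[OF assms(2)], of "- r"] assms(3)
  by (auto elim: eventually_mono)

lemma harmonic_tail_abs_bound:
  assumes "k > 0" "harmonic_tail k f l" "\<And>x. \<bar>f x\<bar> \<le> B"
  shows "\<bar>l\<bar> \<le> B"
proof -
  have "\<forall>\<^sub>F x in at_top. f x \<le> B" "\<forall>\<^sub>F x in at_top. - B \<le> f x"
    using assms(3) by (auto intro!: always_eventually simp: abs_le_iff minus_le_iff)
  then have "l \<le> B" "- B \<le> l"
    using harmonic_tail_upper_bound harmonic_tail_lower_bound assms(1,2) by blast+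
  then show ?thesis by linarith
qed

lemma integral_has_real_derivative_at:
  fixes f :: "real \<Rightarrow> real"
  assumes "continuous_on UNIV f" "L > 0"
  shows "((\<lambda>x. integral {0..x} f) has_real_derivative f L) (at L)"
proof -
  have "((\<lambda>x. integral {0..x} f) has_real_derivative f L) (at L within {0..L+1})"
    by (rule integral_has_real_derivative) (use assms in \<open>auto intro: continuous_on_subset\<close>)
  moreover have "at L within {0..L+1} = at L" using assms by (intro at_within_Icc_at) auto
  ultimately show ?thesis by simp
qed

lemma bounded_div_tendsto_zero:
  fixes g :: "real \<Rightarrow> real"
  assumes "\<And>L. \<bar>g L\<bar> \<le> M"
  shows "((\<lambda>L. g L / L) \<longlongrightarrow> 0) at_top"
proof (rule Lim_null_comparison)
  show "eventually (\<lambda>L. norm (g L / L) \<le> M / L) at_top"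
    using eventually_gt_at_top[of 0]
  proof (rule eventually_mono)
    fix L :: real assume "L > 0"
    with assms[of L] show "norm (g L / L) \<le> M / L" by (simp add: divide_right_mono)
  qed
  show "((\<lambda>L. M / L) \<longlongrightarrow> 0) at_top"
    by (intro tendsto_divide_0[OF tendsto_const] filterlim_at_top_imp_at_infinity[OF filterlim_ident])
qed

text \<open>The running average (1/L) int_0^L f converges to the mean of the harmonic tail:
  the harmonic integrates to a bounded function, and l'Hopital handles the rest.\<close>

lemma harmonic_tail_mean:
  fixes f :: "real \<Rightarrow> real"
  assumes cont: "continuous_on UNIV f" and k: "k > 0" and tail: "harmonic_tail k f l"
  shows "((\<lambda>L. (1 / L) * integral {0..L} f) \<longlongrightarrow> l) at_top"
proof -
  obtain a b where lim: "((\<lambda>x. f x - a * cos (k * x) - b * sin (k * x)) \<longlongrightarrow> l) at_top"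
    using tail unfolding harmonic_tail_def by blast
  define osc where "osc L = a * sin (k * L) / k - b * cos (k * L) / k" for L
  define H where "H L = integral {0..L} f - osc L" for L
  have H_deriv: "eventually (\<lambda>L. (H has_real_derivative f L - a * cos (k * L) - b * sin (k * L)) (at L)) at_top"
    using eventually_gt_at_top[of 0]
  proof (rule eventually_mono)
    fix L :: real assume "L > 0"
    with k show "(H has_real_derivative f L - a * cos (k * L) - b * sin (k * L)) (at L)"
      unfolding H_def osc_def
      by (auto intro!: derivative_eq_intros integral_has_real_derivative_at[OF cont])
  qed
  have "((\<lambda>L. H L / L) \<longlongrightarrow> l) at_top"
    by (rule lhospital_at_top_at_top[where g' = "\<lambda>_. 1"])
       (use H_deriv lim in \<open>auto intro!: derivative_eq_intros filterlim_ident\<close>)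
  moreover have "\<bar>osc L\<bar> \<le> (\<bar>a\<bar> + \<bar>b\<bar>) / k" for L
  proof -
    have "\<bar>a * sin (k * L)\<bar> \<le> \<bar>a\<bar>" "\<bar>b * cos (k * L)\<bar> \<le> \<bar>b\<bar>"
      by (simp_all add: abs_mult mult_left_le)
    then have "\<bar>a * sin (k * L) - b * cos (k * L)\<bar> \<le> \<bar>a\<bar> + \<bar>b\<bar>" by linarith
    then show ?thesis using k by (simp add: osc_def diff_divide_distrib[symmetric] divide_right_mono)
  qed
  then have "((\<lambda>L. osc L / L) \<longlongrightarrow> 0) at_top"
    by (rule bounded_div_tendsto_zero)
  ultimately have "((\<lambda>L. H L / L + osc L / L) \<longlongrightarrow> l) at_top"
    using tendsto_add by fastforce
  then show ?thesis
    by (rule Lim_transform_eventually[OF _ eventually_mono[OF eventually_gt_at_top[of 0]]])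
       (simp add: H_def field_simps)
qed

lemma rbar_plus_harmonic_tail:
  assumes "continuous_on UNIV f" "k > 0" "harmonic_tail k f l"
  shows "rbar_plus f = l"
  unfolding rbar_plus_def by (rule tendsto_Lim[OF _ harmonic_tail_mean[OF assms]]) simp

lemma rbar_minus_harmonic_tail:
  assumes "continuous_on UNIV f" "k > 0" "harmonic_tail k (\<lambda>x. f (- x)) l"
  shows "rbar_minus f = l"
proof -
  have "continuous_on UNIV (\<lambda>x. f (- x))"
    by (rule continuous_on_compose2[OF assms(1)]) (auto intro: continuous_intros)
  from harmonic_tail_mean[OF this assms(2,3)] show ?thesis
    unfolding rbar_minus_def by (intro tendsto_Lim) simp_all
qed

lemma C2_has_deriv:
  assumes "C2 P"
  shows "(P has_real_derivative deriv P x) (at x)"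
  using assms unfolding C2_def by (metis DERIV_imp_deriv)

context
  fixes P :: "real \<Rightarrow> real" and d :: real
  assumes d_pos: "d > 0"
    and P_deriv: "\<And>x. (P has_real_derivative deriv P x) (at x)"
    and P_outer: "\<And>r. \<bar>r\<bar> \<ge> d \<Longrightarrow> deriv P r = sgn r"
begin

lemma smoothed_potential_right:
  assumes "r \<ge> d"
  shows "P r = P d + (r - d)"
proof (cases "r = d")
  case False
  with assms have "d < r" by simp
  from MVT2[OF this P_deriv] obtain z where "d < z" "P r - P d = (r - d) * deriv P z" by blast
  moreover have "deriv P z = 1" using P_outer[of z] \<open>d < z\<close> d_pos by simp
  ultimately show ?thesis by simp
qed simp

lemma smoothed_potential_left:
  assumes "r \<le> - d"
  shows "P r = P (- d) - (r + d)"
proof (cases "r = - d")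
  case False
  with assms have "r < - d" by simp
  from MVT2[OF this P_deriv] obtain z where "z < - d" "P (- d) - P r = (- d - r) * deriv P z" by blast
  moreover have "deriv P z = - 1" using P_outer[of z] \<open>z < - d\<close> d_pos by simp
  ultimately show ?thesis by simp
qed simp

text \<open>I_delta only sees (-d, d), where it integrates Psi' - sgn to Psi(d) - Psi(-d).\<close>

lemma I_delta_eq: "I_delta P = (P d - P (- d)) / 2"
proof -
  define g where "g r = deriv P r - sgn r" for r
  have D_minus: "((\<lambda>r. P r - r) has_vector_derivative deriv P r - 1) (at r within A)"
   and D_plus: "((\<lambda>r. P r + r) has_vector_derivative deriv P r + 1) (at r within A)" for r A
    unfolding has_real_derivative_iff_has_vector_derivative[symmetric]
    by (rule has_field_derivative_at_within, intro DERIV_diff DERIV_add P_deriv DERIV_ident)+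
  have "((\<lambda>r. deriv P r - 1) has_integral (P d - d) - (P 0 - 0)) {0..d}"
    using d_pos D_minus by (intro fundamental_theorem_of_calculus) simp_all
  then have right: "(g has_integral (P d - d) - (P 0 - 0)) {0..d}"
    by (rule has_integral_spike[OF negligible_sing[of 0], rotated]) (simp add: g_def)
  have "((\<lambda>r. deriv P r + 1) has_integral (P 0 + 0) - (P (- d) + - d)) {- d..0}"
    using d_pos D_plus by (intro fundamental_theorem_of_calculus) simp_all
  then have left: "(g has_integral (P 0 + 0) - (P (- d) + - d)) {- d..0}"
    by (rule has_integral_spike[OF negligible_sing[of 0], rotated]) (simp add: g_def)
  have "(g has_integral P d - P (- d)) {- d..d}"
    using has_integral_combine[OF _ _ left right] d_pos by simp
  then have "integral {- d..d} g = P d - P (- d)"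
    by (rule integral_unique)
  moreover have "(\<lambda>r. deriv P r - sgn r) = (\<lambda>r. if r \<in> {- d..d} then g r else 0)"
  proof
    fix r show "deriv P r - sgn r = (if r \<in> {- d..d} then g r else 0)"
    proof (cases "r \<in> {- d..d}")
      case False
      then have "\<bar>r\<bar> \<ge> d" by auto
      with P_outer[of r] False show ?thesis by (simp only: if_False)
    qed (simp add: g_def)
  qed
  ultimately show ?thesis
    unfolding I_delta_def by (simp only: integral_restrict_UNIV)
qed

lemma I_delta_bound:
  assumes "\<And>r. \<bar>deriv P r\<bar> \<le> K"
  shows "\<bar>I_delta P\<bar> \<le> d * K"
proof -
  have "- d < d" using d_pos by simp
  from MVT2[OF this P_deriv] obtain z where "P d - P (- d) = 2 * d * deriv P z" by auto
  then show ?thesis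
    using assms[of z] d_pos by (simp add: I_delta_eq abs_mult)
qed

lemma Upsilon_smoothed:
  assumes "rbar_plus R \<ge> d" "rbar_minus R \<le> - d"
  shows "Upsilon (\<lambda>r. r\<^sup>2 / 2 - P r) (\<lambda>r. r - deriv P r) R
           = - (rbar_plus R + rbar_minus R) - 2 * I_delta P"
proof -
  have "deriv P (rbar_plus R) = 1" "deriv P (rbar_minus R) = - 1"
    using assms P_outer d_pos by auto
  then show ?thesis
    unfolding Upsilon_def I_delta_eq
    using smoothed_potential_right[OF assms(1)] smoothed_potential_left[OF assms(2)]
    by (simp add: power2_eq_square field_simps)
qed

end

lemma Upsilon_sharp:
  assumes "rbar_plus R > 0" "rbar_minus R < 0"
  shows "Upsilon (\<lambda>r. r\<^sup>2 / 2 - \<bar>r\<bar>) (\<lambda>r. r - sgn r) R = - (rbar_plus R + rbar_minus R)"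
  unfolding Upsilon_def using assms by (simp add: power2_eq_square field_simps)

lemma W2inf_continuous: "W2inf R \<Longrightarrow> continuous_on UNIV R"
  unfolding W2inf_def
  by (intro continuous_at_imp_continuous_on) (auto intro: differentiable_imp_continuous_within)

lemma unperturbed_strains:
  assumes k: "k > 0" and cont: "continuous_on UNIV R"
    and R_eq: "R = (\<lambda>x. Rb x + \<alpha> * (cos (k * x) - 1) + \<beta> * sin (k * x))"
    and plus: "(Rb \<longlongrightarrow> lp) at_top"
    and minus: "((\<lambda>x. Rb x - a * (cos (k * x) - 1) - b * sin (k * x)) \<longlongrightarrow> lm) at_bot"
    and right: "\<forall>x>x0. R x > r0" and left: "\<forall>x< -x0. R x < - r0"
  shows "\<exists>p m. harmonic_tail k R p \<and> harmonic_tail k (\<lambda>x. R (- x)) m \<and>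
           rbar_plus R = p \<and> rbar_minus R = m \<and> r0 \<le> p \<and> m \<le> - r0"
proof -
  have "((\<lambda>x. R x - \<alpha> * (cos (k * x) - 1) - \<beta> * sin (k * x)) \<longlongrightarrow> lp) at_top"
    using plus by (simp add: R_eq)
  then have tail_plus: "harmonic_tail k R (lp - \<alpha>)"
    by (rule harmonic_tail_at_top)
  have "((\<lambda>x. R x - (a + \<alpha>) * (cos (k * x) - 1) - (b + \<beta>) * sin (k * x)) \<longlongrightarrow> lm) at_bot"
    using minus by (simp add: R_eq algebra_simps)
  then have tail_minus: "harmonic_tail k (\<lambda>x. R (- x)) (lm - (a + \<alpha>))"
    by (rule harmonic_tail_at_bot)
  have "eventually (\<lambda>x. R x \<ge> r0) at_top"
    using eventually_gt_at_top[of x0] by (rule eventually_mono) (use right in auto)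
  moreover have "eventually (\<lambda>x. R (- x) \<le> - r0) at_top"
    using eventually_gt_at_top[of x0]
  proof (rule eventually_mono)
    fix x assume "x0 < x"
    then show "R (- x) \<le> - r0" using left[rule_format, of "- x"] by simp
  qed
  ultimately show ?thesis
    using harmonic_tail_lower_bound[OF k tail_plus] harmonic_tail_upper_bound[OF k tail_minus]
      rbar_plus_harmonic_tail[OF cont k tail_plus] rbar_minus_harmonic_tail[OF cont k tail_minus]
      tail_plus tail_minus
    by blast
qed

lemma perturbed_strains:
  assumes k: "k > 0" and cont_R: "continuous_on UNIV R" and cont_S: "continuous_on UNIV S"
    and tail_plus: "harmonic_tail k R p" and tail_minus: "harmonic_tail k (\<lambda>x. R (- x)) m"
    and S_bound: "\<And>x. \<bar>S x\<bar> \<le> B"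
    and S_plus: "(S \<longlongrightarrow> l) at_top"
    and S_minus: "((\<lambda>x. S x - a * (cos (k * x) - 1) - b * sin (k * x)) \<longlongrightarrow> l') at_bot"
  shows "\<exists>e1 e2. \<bar>e1\<bar> \<le> B \<and> \<bar>e2\<bar> \<le> B \<and>
           rbar_plus (\<lambda>x. R x - I + S x) = p - I + e1 \<and>
           rbar_minus (\<lambda>x. R x - I + S x) = m - I + e2"
proof -
  have tail_S: "harmonic_tail k S l"
    using harmonic_tail_at_top[of S 0 k 0 l] S_plus by simp
  have tail_S_refl: "harmonic_tail k (\<lambda>x. S (- x)) (l' - a)"
    using S_minus by (rule harmonic_tail_at_bot)
  have bounds: "\<bar>l\<bar> \<le> B" "\<bar>l' - a\<bar> \<le> B"
    using harmonic_tail_abs_bound[OF k tail_S S_bound]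
      harmonic_tail_abs_bound[OF k tail_S_refl S_bound] .
  have "harmonic_tail k (\<lambda>x. R x + - I + S x) (p + - I + l)"
   and "harmonic_tail k (\<lambda>x. R (- x) + - I + S (- x)) (m + - I + (l' - a))"
    using harmonic_tail_add[OF harmonic_tail_add[OF _ harmonic_tail_const] _]
      tail_plus tail_minus tail_S tail_S_refl by blast+
  then have tails: "harmonic_tail k (\<lambda>x. R x - I + S x) (p - I + l)"
    "harmonic_tail k (\<lambda>x. R (- x) - I + S (- x)) (m - I + (l' - a))"
    by simp_all
  have "continuous_on UNIV (\<lambda>x. R x - I + S x)"
    using cont_R cont_S by (intro continuous_intros)
  from rbar_plus_harmonic_tail[OF this k tails(1)] rbar_minus_harmonic_tail[OF this k tails(2)]
  show ?thesis using bounds by blast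
qed

lemma configurational_force_difference:
  assumes d: "d > 0" and P_deriv: "\<And>x. (P has_real_derivative deriv P x) (at x)"
    and P_outer: "\<And>r. \<bar>r\<bar> \<ge> d \<Longrightarrow> deriv P r = sgn r"
    and P_bound: "\<And>r. \<bar>deriv P r\<bar> \<le> K"
    and R0_plus: "rbar_plus R0 = p" "r0 \<le> p" and R0_minus: "rbar_minus R0 = m" "m \<le> - r0"
    and R_plus: "rbar_plus R = p - I_delta P + e1" and R_minus: "rbar_minus R = m - I_delta P + e2"
    and e_bound: "\<bar>e1\<bar> \<le> B" "\<bar>e2\<bar> \<le> B"
    and small: "d * K + d + B < r0"
  shows "Upsilon (\<lambda>r. r\<^sup>2 / 2 - P r) (\<lambda>r. r - deriv P r) R
           - Upsilon (\<lambda>r. r\<^sup>2 / 2 - \<bar>r\<bar>) (\<lambda>r. r - sgn r) R0 = - (e1 + e2)"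
proof -
  have I_bound: "\<bar>I_delta P\<bar> \<le> d * K"
    using I_delta_bound[OF d P_deriv P_outer P_bound] .
  have "0 \<le> d * K" using d P_bound[of 0] by simp
  then have "rbar_plus R \<ge> d" "rbar_minus R \<le> - d" "r0 > 0"
    using R_plus R_minus I_bound e_bound abs_ge_zero[of e1] small R0_plus(2) R0_minus(2) d
    by linarith+
  then show ?thesis
    using Upsilon_smoothed[OF d P_deriv P_outer] Upsilon_sharp[of R0] R0_plus R0_minus R_plus R_minus
    by simp
qed

lemma eventually_small_at_right:
  fixes K B r delta0 :: real
  assumes "r > 0" "delta0 > 0"
  shows "eventually (\<lambda>\<delta>. \<delta> * K + \<delta> + B * \<delta>\<^sup>2 < r \<and> \<delta> \<in> {0<..<delta0}) (at_right 0)"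
proof -
  have "((\<lambda>\<delta>. \<delta> * K + \<delta> + B * \<delta>\<^sup>2) \<longlongrightarrow> 0 * K + 0 + B * 0\<^sup>2) (at_right 0)"
    by (intro tendsto_intros)
  then have "eventually (\<lambda>\<delta>. \<delta> * K + \<delta> + B * \<delta>\<^sup>2 < r) (at_right 0)"
    using order_tendstoD(2) assms(1) by force
  moreover have "eventually (\<lambda>\<delta>. \<delta> \<in> {0<..<delta0}) (at_right 0)"
    using eventually_at_right_real[of 0 delta0] assms(2) by simp
  ultimately show ?thesis by (rule eventually_conj)
qed

theorem lemma5p1:
  fixes Psi :: "real \<Rightarrow> real \<Rightarrow> real" and C_Psi :: real
    and c0 x0 r0 d0 D0 :: real and kc :: "real \<Rightarrow> real"
    and Rc :: "real \<Rightarrow> (real \<Rightarrow> real) set" and Rbar :: "real \<Rightarrow> real \<Rightarrow> real"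
    and U :: "real \<Rightarrow> (real \<times> real) set" and am bm :: "real \<Rightarrow> real"
    and c1 c :: real and R0 :: "real \<Rightarrow> real"
    and delta0 C :: real and S :: "real \<Rightarrow> real \<Rightarrow> real"
  assumes Psi_C2: "\<And>\<delta>. \<delta> > 0 \<Longrightarrow> C2 (Psi \<delta>)"
    and Psi_0: "\<And>\<delta>. \<delta> > 0 \<Longrightarrow> Psi \<delta> 0 = 0"
    and Psi_out: "\<And>\<delta> r. \<delta> > 0 \<Longrightarrow> \<bar>r\<bar> \<ge> \<delta> \<Longrightarrow> deriv (Psi \<delta>) r = sgn r"
    and Psi_d1: "\<And>\<delta> r. \<delta> > 0 \<Longrightarrow> \<bar>deriv (Psi \<delta>) r\<bar> \<le> C_Psi"
    and Psi_d2: "\<And>\<delta> r. \<delta> > 0 \<Longrightarrow> \<bar>deriv (deriv (Psi \<delta>)) r\<bar> \<le> C_Psi / \<delta>"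
    \<comment> \<open>standing hypothesis: unperturbed waves\<close>
    and c0: "0 < c0" "c0 < 1"
    and consts_pos: "x0 > 0" "r0 > 0" "d0 > 0" "D0 > 0"
    and kc: "\<And>c'. c' \<in> {c0..<1} \<Longrightarrow>
              kc c' > 0 \<and> disp_a (kc c') = c' \<and> (\<forall>k>0. disp_a k = c' \<longrightarrow> k = kc c')"
    and Rc_def: "\<And>c'. c' \<in> {c0..<1} \<Longrightarrow> open (U c') \<and> (0, 0) \<in> U c' \<and>
              Rc c' = {(\<lambda>x. Rbar c' x + \<alpha> * (cos (kc c' * x) - 1) + \<beta> * sin (kc c' * x))
                        | \<alpha> \<beta>. (\<alpha>, \<beta>) \<in> U c'}"
    and Rbar_tails: "\<And>c'. c' \<in> {c0..<1} \<Longrightarrow>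
              (\<exists>l. (Rbar c' \<longlongrightarrow> l) at_top) \<and>
              (\<exists>l. ((\<lambda>x. Rbar c' x - am c' * (cos (kc c' * x) - 1) - bm c' * sin (kc c' * x))
                       \<longlongrightarrow> l) at_bot)"
    and Rc_props: "\<And>c' R. c' \<in> {c0..<1} \<Longrightarrow> R \<in> Rc c' \<Longrightarrow>
              tw_solution c' sgn R \<and> R 0 = 0 \<and> (\<forall>x. \<bar>R x\<bar> \<le> D0 / (1 - c'\<^sup>2)) \<and>
              (\<forall>x>x0. R x > r0) \<and> (\<forall>x< -x0. R x < - r0) \<and>
              (\<forall>x. \<bar>x\<bar> < x0 \<longrightarrow> deriv R x > d0)"
    \<comment> \<open>the fixed data of the lemma\<close>
    and c1: "c0 < c1" "c1 < 1"
    and c: "c0 < c" "c < c1"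
    and R0: "R0 \<in> Rc c"
    \<comment> \<open>the travelling waves R_delta = R0 - I_delta + S_delta from the Main Theorem\<close>
    and delta0: "delta0 > 0"
    and S_W2: "\<And>\<delta>. \<delta> \<in> {0<..<delta0} \<Longrightarrow> W2inf (S \<delta>)"
    and S_0: "\<And>\<delta>. \<delta> \<in> {0<..<delta0} \<Longrightarrow> S \<delta> 0 = 0"
    and S_bd0: "\<And>\<delta> x. \<delta> \<in> {0<..<delta0} \<Longrightarrow> \<bar>S \<delta> x\<bar> \<le> C * \<delta>\<^sup>2"
    and S_bd1: "\<And>\<delta> x. \<delta> \<in> {0<..<delta0} \<Longrightarrow> \<bar>deriv (S \<delta>) x\<bar> \<le> C * \<delta>"
    and S_bd2: "\<And>\<delta> x y. \<delta> \<in> {0<..<delta0} \<Longrightarrow>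
              \<bar>deriv (S \<delta>) x - deriv (S \<delta>) y\<bar> \<le> C * \<bar>x - y\<bar>"
    and S_plus: "\<And>\<delta>. \<delta> \<in> {0<..<delta0} \<Longrightarrow> \<exists>l. (S \<delta> \<longlongrightarrow> l) at_top"
    and S_minus: "\<And>\<delta>. \<delta> \<in> {0<..<delta0} \<Longrightarrow> \<exists>\<alpha> \<beta> l.
              ((\<lambda>x. S \<delta> x - \<alpha> * (cos (kc c * x) - 1) - \<beta> * sin (kc c * x)) \<longlongrightarrow> l) at_bot"
    and R_tw: "\<And>\<delta>. \<delta> \<in> {0<..<delta0} \<Longrightarrow>
              tw_solution c (deriv (Psi \<delta>)) (\<lambda>x. R0 x - I_delta (Psi \<delta>) + S \<delta> x)"
  shows "(\<lambda>\<delta>. Upsilon (\<lambda>r. r\<^sup>2 / 2 - Psi \<delta> r) (\<lambda>r. r - deriv (Psi \<delta>) r)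
                       (\<lambda>x. R0 x - I_delta (Psi \<delta>) + S \<delta> x)
             - Upsilon (\<lambda>r. r\<^sup>2 / 2 - \<bar>r\<bar>) (\<lambda>r. r - sgn r) R0)
         \<in> O[at_right 0](\<lambda>\<delta>. \<delta>\<^sup>2)"
proof -
  have cI: "c \<in> {c0..<1}" using c c1 by auto
  define k where "k = kc c"
  have k: "k > 0" using kc[OF cI] by (simp add: k_def)
  obtain \<alpha> \<beta> where R0_eq: "R0 = (\<lambda>x. Rbar c x + \<alpha> * (cos (k * x) - 1) + \<beta> * sin (k * x))"
    using R0 Rc_def[OF cI] by (auto simp: k_def)
  have R0_wave: "W2inf R0" "\<forall>x>x0. R0 x > r0" "\<forall>x< -x0. R0 x < - r0"
    using Rc_props[OF cI R0] by (auto simp: tw_solution_def)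
  obtain lp lm where "(Rbar c \<longlongrightarrow> lp) at_top"
    and "((\<lambda>x. Rbar c x - am c * (cos (k * x) - 1) - bm c * sin (k * x)) \<longlongrightarrow> lm) at_bot"
    using Rbar_tails[OF cI] by (auto simp: k_def)
  from unperturbed_strains[OF k W2inf_continuous[OF R0_wave(1)] R0_eq this R0_wave(2,3)]
  obtain p m where tails_R0: "harmonic_tail k R0 p" "harmonic_tail k (\<lambda>x. R0 (- x)) m"
    and R0_strains: "rbar_plus R0 = p" "r0 \<le> p" "rbar_minus R0 = m" "m \<le> - r0"
    by blast
  have diff_bound: "\<bar>Upsilon (\<lambda>r. r\<^sup>2 / 2 - Psi \<delta> r) (\<lambda>r. r - deriv (Psi \<delta>) r)
                         (\<lambda>x. R0 x - I_delta (Psi \<delta>) + S \<delta> x)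
                     - Upsilon (\<lambda>r. r\<^sup>2 / 2 - \<bar>r\<bar>) (\<lambda>r. r - sgn r) R0\<bar> \<le> 2 * C * \<delta>\<^sup>2"
    if small: "\<delta> * C_Psi + \<delta> + C * \<delta>\<^sup>2 < r0" and \<delta>: "\<delta> \<in> {0<..<delta0}" for \<delta>
  proof -
    have "\<delta> > 0" using \<delta> by simp
    obtain a b l l' where "(S \<delta> \<longlongrightarrow> l) at_top"
      "((\<lambda>x. S \<delta> x - a * (cos (k * x) - 1) - b * sin (k * x)) \<longlongrightarrow> l') at_bot"
      using S_plus[OF \<delta>] S_minus[OF \<delta>] by (auto simp: k_def)
    from perturbed_strains[OF k W2inf_continuous[OF R0_wave(1)] W2inf_continuous[OF S_W2[OF \<delta>]]
        tails_R0 S_bd0[OF \<delta>] this]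
    obtain e1 e2 where e: "\<bar>e1\<bar> \<le> C * \<delta>\<^sup>2" "\<bar>e2\<bar> \<le> C * \<delta>\<^sup>2"
      "rbar_plus (\<lambda>x. R0 x - I_delta (Psi \<delta>) + S \<delta> x) = p - I_delta (Psi \<delta>) + e1"
      "rbar_minus (\<lambda>x. R0 x - I_delta (Psi \<delta>) + S \<delta> x) = m - I_delta (Psi \<delta>) + e2"
      by blast
    have "\<bar>e1 + e2\<bar> \<le> 2 * C * \<delta>\<^sup>2"
      using e(1,2) abs_triangle_ineq[of e1 e2] by linarith
    with configurational_force_difference[OF \<open>\<delta> > 0\<close> C2_has_deriv[OF Psi_C2[OF \<open>\<delta> > 0\<close>]]
        Psi_out[OF \<open>\<delta> > 0\<close>] Psi_d1[OF \<open>\<delta> > 0\<close>] R0_strains e(3,4) e(1,2) small]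
    show ?thesis by simp
  qed
  show ?thesis
    using eventually_small_at_right[OF consts_pos(2) delta0, of C_Psi C]
    by (intro bigoI[where c = "2 * C"]) (auto elim!: eventually_mono intro: diff_bound)
qed

end
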